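(* Let $a,b,q$ be complex numbers with $q\ne 0$. Let $A=(A_{n,k})_{n,k\ge0}$ be the infinite lower-triangular matrix with entries $$A_{n,k}=[z^{n-k}]\Big\{\frac{(az;q)_k}{(bz;q)_k}\Big\}\quad(n\ge k),\qquad A_{n,k}=0\ (n<k),$$ and let $A^{-1}=(B_{n,k}(a,b))$ be its inverse. Then for all integers $n\ge k\ge0$, $$B_{n,k}(a,b)=[z^{n-k}]\Big\{\frac{(bz;q)_{n-1}}{(az;q)_n}\Big\}-a\sum_{i=k}^{n-1}B_{n-i,1}(a,b)\,q^{(n-i)i}\,[z^{i-k}]\Big\{\frac{(bz;q)_i}{(az;q)_{i+1}}\Big\}.$$
   Context: For any integer $n$, $(x;q)_n=\prod_{j\ge0}(1-xq^j)/\prod_{j\ge0}(1-xq^{n+j})$, so $(x;q)_0=1$, $(x;q)_n=\prod_{j=0}^{n-1}(1-xq^j)$ for $n\ge1$, $(x;q)_{-1}=1/(1-x/q)$; quotients of these are regarded as formal power series in $z$, and $[z^m]\{f\}$ is the coefficient of $z^m$ in $f$. Two lower-triangular matrices $A,B$ are inverse if $\sum_{i=k}^nA_{n,i}B_{i,k}=\sum_{i=k}^nB_{n,i}A_{i,k}=\delta_{n,k}$ for all $n,k\ge0$. Equivalently, $z^k=\sum_{n\ge k}B_{n,k}(a,b)z^n(az;q)_n/(bz;q)_n$ for all $k\ge0$. Empty sums are $0$. *)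

theory Defs
  imports "HOL-Computational_Algebra.Formal_Power_Series"
begin

definition qpoch :: "complex \<Rightarrow> complex \<Rightarrow> int \<Rightarrow> complex fps" where
  "qpoch c q n =
     (if n \<ge> 0 then (\<Prod>j<nat n. 1 - fps_const (c * q ^ j) * fps_X)
      else inverse (\<Prod>j<nat (- n). 1 - fps_const (c / q ^ (j + 1)) * fps_X))"

definition Amat :: "complex \<Rightarrow> complex \<Rightarrow> complex \<Rightarrow> nat \<Rightarrow> nat \<Rightarrow> complex" where
  "Amat a b q n k =
     (if k \<le> n then fps_nth (qpoch a q (int k) * inverse (qpoch b q (int k))) (n - k) else 0)"

definition lt_inverse :: "(nat \<Rightarrow> nat \<Rightarrow> complex) \<Rightarrow> (nat \<Rightarrow> nat \<Rightarrow> complex) \<Rightarrow> bool" where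
  "lt_inverse A B \<longleftrightarrow>
     (\<forall>n k. n < k \<longrightarrow> A n k = 0) \<and> (\<forall>n k. n < k \<longrightarrow> B n k = 0) \<and>
     (\<forall>n k. (\<Sum>i=k..n. A n i * B i k) = (if n = k then 1 else 0)) \<and>
     (\<forall>n k. (\<Sum>i=k..n. B n i * A i k) = (if n = k then 1 else 0))"

end

theory Submission
  imports Defs "HOL-Computational_Algebra.Polynomial"
begin

text \<open>
  Write C(n,k) for the right-hand side. Since A is unitriangular, the n-th row of its inverse
  is the only vector x with sum_i x_i A(i,k) = delta(n,k) for all k <= n, so it suffices to
  check this for x_i = C(n,i). The k-th column of A has generating function
  (az;q)_k/(bz;q)_k, and multiplying (bz;q)_m/(az;q)_n by it cancels the first k factors and
  dilates z to q^k z. For n = k + m with m >= 1, both parts of sum_i C(n,i) A(i,k) thereby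
  become q^(km) a [z^(m-1)] (bz;q)_m/(az;q)_(m+1): the first by the identity
  [z^(r+1)] (bz;q)_r/(az;q)_(r+1) = a [z^r] (bz;q)_(r+1)/(az;q)_(r+2), the second by the
  first column of A B = I.
\<close>

unbundle fps_syntax

lemma fps_prod_nth_0: "(\<Prod>j\<in>S. F j) $ 0 = (\<Prod>j\<in>S. (F j $ 0 :: 'a::comm_ring_1))"
  by (induction S rule: infinite_finite_induct) simp_all

lemma one_minus_linear_compose_linear:
  "(1 - fps_const d * fps_X) oo (fps_const e * fps_X)
     = 1 - fps_const (d * e) * (fps_X :: 'a::comm_ring_1 fps)"
  by (rule fps_ext) (subst fps_nth_compose_linear, auto simp: le_Suc_eq mult.commute)

lemma nth_mult_one_minus_linear:
  "(F * (1 - fps_const c * fps_X)) $ Suc n = F $ Suc n - c * F $ n" for F :: "'a::comm_ring_1 fps"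
proof -
  have "F * (1 - fps_const c * fps_X) = F - fps_const c * (fps_X * F)"
    by (simp add: algebra_simps)
  then show ?thesis
    by simp
qed

lemma fps_mult_nth_offset:
  fixes F G :: "'a::comm_semiring_1 fps"
  assumes "k \<le> n"
  shows "(F * G) $ (n - k) = (\<Sum>i=k..n. F $ (n - i) * G $ (i - k))"
proof -
  have "(F * G) $ (n - k) = (G * F) $ (n - k)"
    by (simp add: mult.commute)
  also have "\<dots> = (\<Sum>j=0..n-k. G $ j * F $ (n - k - j))"
    by (simp add: fps_mult_nth)
  also have "\<dots> = (\<Sum>i=k..n. F $ (n - i) * G $ (i - k))"
    using assms by (intro sum.reindex_bij_witness[of _ "\<lambda>i. i - k" "\<lambda>j. j + k"])
      (auto simp: mult.commute add.commute)
  finally show ?thesis .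
qed

definition polynomial_coeffs :: "('a::comm_ring_1 \<Rightarrow> 'a fps) \<Rightarrow> bool" where
  "polynomial_coeffs F \<longleftrightarrow> (\<forall>n. \<exists>p. \<forall>x. F x $ n = poly p x)"

lemma polynomial_coeffsE:
  assumes "polynomial_coeffs F"
  obtains P where "\<And>n x. F x $ n = poly (P n) x"
  using assms unfolding polynomial_coeffs_def by metis

lemma polynomial_coeffs_const: "polynomial_coeffs (\<lambda>x. f)"
  unfolding polynomial_coeffs_def by (metis mult_zero_right add.right_neutral poly_0 poly_pCons)

lemma polynomial_coeffs_fps_const_poly: "polynomial_coeffs (\<lambda>x. fps_const (poly p x))"
  unfolding polynomial_coeffs_def by (metis fps_nth_fps_const poly_0)

lemma polynomial_coeffs_diff:
  assumes "polynomial_coeffs F" "polynomial_coeffs G"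
  shows "polynomial_coeffs (\<lambda>x. F x - G x)"
  using assms unfolding polynomial_coeffs_def by (metis fps_sub_nth poly_diff)

lemma polynomial_coeffs_mult:
  assumes "polynomial_coeffs F" "polynomial_coeffs G"
  shows "polynomial_coeffs (\<lambda>x. F x * G x)"
proof -
  obtain P where P: "\<And>n x. F x $ n = poly (P n) x" using assms(1) polynomial_coeffsE by blast
  obtain Q where Q: "\<And>n x. G x $ n = poly (Q n) x" using assms(2) polynomial_coeffsE by blast
  have "(F x * G x) $ n = poly (\<Sum>i=0..n. P i * Q (n - i)) x" for n x
    by (simp add: fps_mult_nth poly_sum P Q)
  then show ?thesis
    unfolding polynomial_coeffs_def by blast
qed

lemma polynomial_coeffs_prod:
  assumes "\<And>t. t \<in> S \<Longrightarrow> polynomial_coeffs (\<lambda>x. F x t)"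
  shows "polynomial_coeffs (\<lambda>x. \<Prod>t\<in>S. F x t)"
  using assms
  by (induction S rule: infinite_finite_induct) (simp_all add: polynomial_coeffs_const polynomial_coeffs_mult)

lemma polynomial_coeffs_inverse:
  fixes F :: "'a::field \<Rightarrow> 'a fps"
  assumes "polynomial_coeffs F" and F0: "\<And>x. F x $ 0 = 1"
  shows "polynomial_coeffs (\<lambda>x. inverse (F x))"
proof -
  obtain P where P: "\<And>n x. F x $ n = poly (P n) x" using assms(1) polynomial_coeffsE by blast
  have "\<exists>p. \<forall>x. inverse (F x) $ n = poly p x" for n
  proof (induction n rule: less_induct)
    case (less n)
    then obtain R where R: "\<And>i x. i < n \<Longrightarrow> inverse (F x) $ i = poly (R i) x"
      by metis
    show ?case
    proof (cases "n = 0")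
      case True
      then show ?thesis
        using F0 by (metis fps_inverse_nth_0 inverse_1 poly_1)
    next
      case False
      have "inverse (F x) $ n = - (\<Sum>i=1..n. F x $ i * inverse (F x) $ (n - i))" for x
        using False F0[of x] by (simp add: fps_inverse_def fps_right_inverse_constructor_rec)
      then have "inverse (F x) $ n = poly (- (\<Sum>i=1..n. P i * R (n - i))) x" for x
        using False by (simp add: poly_sum P R)
      then show ?thesis
        by blast
    qed
  qed
  then show ?thesis
    unfolding polynomial_coeffs_def by blast
qed

lemma polynomial_coeffs_nth_eq_0:
  fixes F :: "'a::{idom,ring_char_0} \<Rightarrow> 'a fps"
  assumes "polynomial_coeffs F" "d \<noteq> 0" "\<And>x. poly d x \<noteq> 0 \<Longrightarrow> F x $ n = 0"
  shows "F x $ n = 0"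
proof -
  obtain P where P: "\<And>n x. F x $ n = poly (P n) x"
    using assms(1) polynomial_coeffsE by blast
  have "\<forall>x. poly (d * P n) x = 0"
    using assms(3) by (metis P mult_not_zero poly_mult)
  then have "d * P n = 0"
    by (simp only: poly_all_0_iff_0)
  then have "P n = 0"
    using assms(2) by simp
  then show ?thesis
    by (simp add: P)
qed

lemma sum_triangle_swap:
  fixes n :: nat
  shows "(\<Sum>i=k..<n. \<Sum>j=i..<n. g i j) = (\<Sum>j=k..<n. \<Sum>i=k..j. (g i j :: 'a::comm_monoid_add))"
  by (induction n)
    (auto simp: sum.distrib atLeastLessThanSuc atLeastLessThanSuc_atLeastAtMost[symmetric] add_ac)

lemma lt_inverse_solve_row:
  assumes "lt_inverse A B" "k \<le> m" "\<And>l. l \<in> {k..m} \<Longrightarrow> v l = (\<Sum>N=l..m. w N * A N l)"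
  shows "(\<Sum>l=k..m. v l * B l k) = w k"
proof -
  have "(\<Sum>l=k..m. v l * B l k) = (\<Sum>l=k..m. \<Sum>N=l..m. w N * (A N l * B l k))"
    by (simp add: assms(3) sum_distrib_right mult.assoc)
  also have "\<dots> = (\<Sum>N=k..m. w N * (\<Sum>l=k..N. A N l * B l k))"
    using sum_triangle_swap[where k = k and n = "Suc m"]
    by (simp add: atLeastLessThanSuc_atLeastAtMost sum_distrib_left)
  also have "\<dots> = (\<Sum>N=k..m. if N = k then w N else 0)"
    using assms(1) by (intro sum.cong) (auto simp: lt_inverse_def)
  also have "\<dots> = w k"
    using assms(2) by simp
  finally show ?thesis .
qed

lemma unitriangular_left_inverse_row_unique:
  fixes A :: "nat \<Rightarrow> nat \<Rightarrow> 'a::comm_ring_1"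
  assumes "\<And>i. A i i = 1"
    and "\<And>k. k \<le> n \<Longrightarrow> (\<Sum>i=k..n. X i * A i k) = (\<Sum>i=k..n. Y i * A i k)"
  shows "k \<le> n \<Longrightarrow> X k = Y k"
proof (induction "n - k" arbitrary: k rule: less_induct)
  case less
  have "(\<Sum>i=Suc k..n. X i * A i k) = (\<Sum>i=Suc k..n. Y i * A i k)"
    using less by (intro sum.cong) auto
  then show ?case
    using assms(2)[OF less.prems] less.prems by (simp add: sum.atLeast_Suc_atMost assms(1))
qed

text \<open>\<^term>\<open>qseg c q i j\<close> is (c q^i z; q)_(j-i), and \<^term>\<open>qratio b a q m n\<close> is
  (bz;q)_m/(az;q)_n.\<close>

definition qseg :: "'a::comm_ring_1 \<Rightarrow> 'a \<Rightarrow> nat \<Rightarrow> nat \<Rightarrow> 'a fps" where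
  "qseg c q i j = (\<Prod>t\<in>{i..<j}. 1 - fps_const (c * q ^ t) * fps_X)"

definition qratio :: "'a::field \<Rightarrow> 'a \<Rightarrow> 'a \<Rightarrow> nat \<Rightarrow> nat \<Rightarrow> 'a fps" where
  "qratio b a q m n = qseg b q 0 m * inverse (qseg a q 0 n)"

lemma qseg_nth_0 [simp]: "qseg c q i j $ 0 = 1"
  by (simp add: qseg_def fps_prod_nth_0)

lemma qseg_split: "i \<le> k \<Longrightarrow> k \<le> j \<Longrightarrow> qseg c q i j = qseg c q i k * qseg c q k j"
  unfolding qseg_def by (simp add: prod.atLeastLessThan_concat)

lemma qseg_Suc_left:
  "i < j \<Longrightarrow> qseg c q i j = (1 - fps_const (c * q ^ i) * fps_X) * qseg c q (Suc i) j"
  unfolding qseg_def by (simp add: prod.atLeast_Suc_lessThan)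

lemma qseg_Suc_right:
  "i \<le> j \<Longrightarrow> qseg c q i (Suc j) = qseg c q i j * (1 - fps_const (c * q ^ j) * fps_X)"
  unfolding qseg_def by (simp add: prod.atLeastLessThan_Suc)

lemma qseg_shift:
  fixes c q :: "'a::idom"
  shows "qseg c q (k + i) (k + j) = qseg c q i j oo (fps_const (q ^ k) * fps_X)"
proof -
  have "qseg c q (k + i) (k + j) = (\<Prod>t\<in>{i..<j}. 1 - fps_const (c * q ^ t * q ^ k) * fps_X)"
    unfolding qseg_def add.commute[of k] prod.shift_bounds_nat_ivl
    by (simp add: power_add mult.assoc)
  then show ?thesis
    by (simp add: qseg_def fps_compose_prod_distrib one_minus_linear_compose_linear)
qed

lemma qratio_cancel:
  assumes "k \<le> m" "k \<le> n"
  shows "qratio b a q m n * qratio a b q k k = qseg b q k m * inverse (qseg a q k n)"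
proof -
  have "qratio b a q m n * qratio a b q k k
      = qseg b q k m * inverse (qseg a q k n) * ((inverse (qseg a q 0 k) * qseg a q 0 k)
          * (qseg b q 0 k * inverse (qseg b q 0 k)))"
    using assms unfolding qratio_def
    by (simp only: qseg_split[of 0 k m] qseg_split[of 0 k n] fps_inverse_mult le0) (simp only: mult_ac)
  then show ?thesis
    by (simp add: inverse_mult_eq_1 inverse_mult_eq_1')
qed

lemma nth_qratio_mult_column:
  assumes "k \<le> m" "k \<le> n"
  shows "(qratio b a q m n * qratio a b q k k) $ j = q ^ (k * j) * qratio b a q (m - k) (n - k) $ j"
proof -
  have "qratio b a q m n * qratio a b q k k
      = qseg b q (k + 0) (k + (m - k)) * inverse (qseg a q (k + 0) (k + (n - k)))"
    using assms by (simp add: qratio_cancel)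
  also have "\<dots> = qratio b a q (m - k) (n - k) oo (fps_const (q ^ k) * fps_X)"
    unfolding qseg_shift qratio_def by (simp add: fps_compose_mult_distrib fps_inverse_compose)
  finally show ?thesis
    by (simp add: power_mult)
qed

lemma qratio_nth_Suc_off_roots_of_unity:
  fixes a b q :: "'a::field"
  assumes "q ^ Suc r \<noteq> 1"
  shows "qratio b a q r (Suc r) $ Suc r = a * qratio b a q (Suc r) (Suc (Suc r)) $ r"
proof -
  txt \<open>Dilating z to q z and splitting off the last factor give two functional equations
    relating T and G; their coefficients of z^(r+1) differ by (q^(r+1) - 1)(T_(r+1) - a G_r).\<close>
  define L where "L c = 1 - fps_const c * fps_X" for c :: 'a
  define T where "T = qratio b a q r (Suc r)"
  define G where "G = qratio b a q (Suc r) (Suc (Suc r))"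
  have L_inverse: "inverse (L c) * L c = 1" for c
    by (simp add: L_def inverse_mult_eq_1)
  have "T oo (fps_const q * fps_X)
      = qseg b q (1 + 0) (1 + r) * inverse (qseg a q (1 + 0) (1 + Suc r))"
    unfolding qseg_shift T_def qratio_def by (simp add: fps_compose_mult_distrib fps_inverse_compose)
  moreover have "G = L b * qseg b q 1 (Suc r) * inverse (L a * qseg a q 1 (Suc (Suc r)))"
    unfolding G_def qratio_def by (simp add: qseg_Suc_left[of 0] L_def)
  ultimately have dilated: "G * L a = (T oo (fps_const q * fps_X)) * L b"
    using L_inverse[of a] by (simp add: fps_inverse_mult mult_ac)
  have "G = qseg b q 0 r * L (b * q ^ r) * inverse (qseg a q 0 (Suc r) * L (a * q ^ Suc r))"
    unfolding G_def qratio_def L_def by (simp only: qseg_Suc_right le0)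
  then have raised: "G * L (a * q ^ Suc r) = T * L (b * q ^ r)"
    using L_inverse[of "a * q ^ Suc r"] by (simp add: T_def qratio_def fps_inverse_mult mult_ac)
  have "G $ Suc r - a * G $ r = q ^ Suc r * T $ Suc r - b * (q ^ r * T $ r)"
    using arg_cong[OF dilated, of "\<lambda>F. F $ Suc r"]
    by (simp only: L_def nth_mult_one_minus_linear fps_nth_compose_linear)
  moreover have "G $ Suc r - a * q ^ Suc r * G $ r = T $ Suc r - b * q ^ r * T $ r"
    using arg_cong[OF raised, of "\<lambda>F. F $ Suc r"] by (simp only: L_def nth_mult_one_minus_linear)
  ultimately have "(q ^ Suc r - 1) * (T $ Suc r - a * G $ r) = 0"
    by (simp add: algebra_simps)
  with assms show ?thesis
    by (simp add: T_def G_def)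
qed

lemma polynomial_coeffs_qratio: "polynomial_coeffs (\<lambda>q. qratio b a q m n)"
proof -
  have "polynomial_coeffs (\<lambda>q. fps_const (c * q ^ t))" for c :: 'a and t
    using polynomial_coeffs_fps_const_poly[of "monom c t"] by (simp add: poly_monom)
  then have "polynomial_coeffs (\<lambda>q. qseg c q i j)" for c :: 'a and i j
    unfolding qseg_def
    by (intro polynomial_coeffs_prod polynomial_coeffs_diff polynomial_coeffs_mult polynomial_coeffs_const)
      blast
  then show ?thesis
    unfolding qratio_def by (intro polynomial_coeffs_mult polynomial_coeffs_inverse) simp_all
qed

text \<open>Both sides are polynomials in q that agree off the (r+1)-st roots of unity.\<close>

lemma qratio_nth_Suc:
  fixes a b q :: "'a::field_char_0"
  shows "qratio b a q r (Suc r) $ Suc r = a * qratio b a q (Suc r) (Suc (Suc r)) $ r"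
proof -
  define F where
    "F q = qratio b a q r (Suc r) - fps_const a * fps_X * qratio b a q (Suc r) (Suc (Suc r))"
    for q :: 'a
  have "polynomial_coeffs F"
    unfolding F_def by (intro polynomial_coeffs_diff polynomial_coeffs_mult polynomial_coeffs_const
        polynomial_coeffs_qratio)
  moreover have "monom 1 (Suc r) - 1 \<noteq> (0 :: 'a poly)"
    using poly_0[of "0 :: 'a"] by (auto simp: poly_monom dest: arg_cong[of _ _ "\<lambda>p. poly p 0"])
  moreover have "F x $ Suc r = 0" if "poly (monom 1 (Suc r) - 1) x \<noteq> 0" for x
    using that qratio_nth_Suc_off_roots_of_unity[of x r b a]
    by (simp add: F_def poly_monom mult.assoc)
  ultimately have "F q $ Suc r = 0"
    by (rule polynomial_coeffs_nth_eq_0)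
  then show ?thesis
    by (simp add: F_def mult.assoc)
qed

lemma qpoch_of_nat: "qpoch c q (int n) = qseg c q 0 n"
  by (simp add: qpoch_def qseg_def atLeast0LessThan)

lemma qpoch_nth_0 [simp]: "qpoch c q n $ 0 = 1"
  by (simp add: qpoch_def fps_prod_nth_0)

lemma qpoch_ratio_eq_qratio:
  "qpoch b q (int i) * inverse (qpoch a q (int i + 1)) = qratio b a q i (Suc i)"
proof -
  have "int i + 1 = int (Suc i)"
    by simp
  then show ?thesis
    by (simp only: qratio_def qpoch_of_nat)
qed

lemma nth_qpoch_pred_ratio:
  assumes "k \<le> n"
  shows "(qpoch b q (int n - 1) * inverse (qpoch a q (int n))) $ (n - k)
       = qratio b a q (n - 1) n $ (n - k)"
proof (cases "n = 0")
  case True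
  with assms show ?thesis
    by (simp add: qratio_def)
next
  case False
  then have "int n - 1 = int (n - 1)"
    by simp
  then show ?thesis
    by (simp only: qratio_def qpoch_of_nat)
qed

lemma Amat_eq_qratio: "k \<le> n \<Longrightarrow> Amat a b q n k = qratio a b q k k $ (n - k)"
  by (simp add: Amat_def qratio_def qpoch_of_nat)

lemma Amat_diag: "Amat a b q k k = 1"
  by (simp add: Amat_eq_qratio qratio_def)

lemma inverse_column_one_sum:
  assumes "lt_inverse (Amat a b q) B" "1 \<le> m"
  shows "(\<Sum>l=1..m. q ^ (l * (m - l)) * qratio b a q (m - l) (Suc (m - l)) $ (m - l) * B l 1)
       = qratio b a q m (Suc m) $ (m - 1)"
proof (rule lt_inverse_solve_row[OF assms])
  fix l assume l: "l \<in> {1..m}"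
  then have "q ^ (l * (m - l)) * qratio b a q (m - l) (Suc (m - l)) $ (m - l)
      = (qratio b a q m (Suc m) * qratio a b q l l) $ (m - l)"
    by (simp add: nth_qratio_mult_column Suc_diff_le)
  also have "\<dots> = (\<Sum>N=l..m. qratio b a q m (Suc m) $ (m - N) * Amat a b q N l)"
    using l by (simp add: fps_mult_nth_offset Amat_eq_qratio)
  finally show "q ^ (l * (m - l)) * qratio b a q (m - l) (Suc (m - l)) $ (m - l)
      = (\<Sum>N=l..m. qratio b a q m (Suc m) $ (m - N) * Amat a b q N l)" .
qed

lemma leading_sum_times_Amat:
  fixes a b q :: complex
  assumes n: "n = k + m" and m: "1 \<le> m"
  shows "(\<Sum>i=k..n. qratio b a q (n - 1) n $ (n - i) * Amat a b q i k)
       = q ^ (k * m) * a * qratio b a q m (Suc m) $ (m - 1)"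
proof -
  have "(\<Sum>i=k..n. qratio b a q (n - 1) n $ (n - i) * Amat a b q i k)
      = (qratio b a q (n - 1) n * qratio a b q k k) $ (n - k)"
    using n by (simp add: fps_mult_nth_offset[symmetric] Amat_eq_qratio)
  also have "\<dots> = q ^ (k * m) * qratio b a q (m - 1) (Suc (m - 1)) $ Suc (m - 1)"
    using m by (simp add: n nth_qratio_mult_column)
  also have "\<dots> = q ^ (k * m) * a * qratio b a q m (Suc m) $ (m - 1)"
    using m qratio_nth_Suc[of b a q "m - 1"] by simp
  finally show ?thesis .
qed

lemma power_mult_nth_qratio_column:
  fixes a b q :: "'a::field"
  assumes "k \<le> j" "j \<le> n"
  shows "q ^ ((n - j) * j) * (qratio b a q j (Suc j) * qratio a b q k k) $ (j - k)
       = q ^ (k * (n - k)) * (q ^ ((n - j) * (j - k)) * qratio b a q (j - k) (Suc (j - k)) $ (j - k))"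
proof -
  have "(n - j) * j + k * (j - k) = k * (n - k) + (n - j) * (j - k)"
    using assms by (auto simp: le_iff_add algebra_simps)
  then have "q ^ ((n - j) * j) * q ^ (k * (j - k)) = q ^ (k * (n - k)) * q ^ ((n - j) * (j - k))"
    by (metis power_add)
  then show ?thesis
    using assms by (simp add: nth_qratio_mult_column Suc_diff_le)
qed

lemma correction_sum_times_Amat:
  fixes a b q :: complex
  assumes inv: "lt_inverse (Amat a b q) B" and n: "n = k + m" and m: "1 \<le> m"
  defines "h j \<equiv> qratio b a q j (Suc j)"
  shows "(\<Sum>i=k..n. (\<Sum>j=i..<n. B (n - j) 1 * q ^ ((n - j) * j) * h j $ (j - i)) * Amat a b q i k)
       = q ^ (k * m) * h m $ (m - 1)"
proof -
  have "(\<Sum>i=k..n. (\<Sum>j=i..<n. B (n - j) 1 * q ^ ((n - j) * j) * h j $ (j - i)) * Amat a b q i k)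
      = (\<Sum>i=k..<n. \<Sum>j=i..<n. B (n - j) 1 * (q ^ ((n - j) * j) * (h j $ (j - i) * Amat a b q i k)))"
    using n by (simp add: sum.last_plus sum_distrib_right mult.assoc
        atLeastLessThanSuc_atLeastAtMost[symmetric])
  also have "\<dots> = (\<Sum>j=k..<n. B (n - j) 1 * (q ^ ((n - j) * j) * (h j * qratio a b q k k) $ (j - k)))"
    by (simp add: sum_triangle_swap sum_distrib_left fps_mult_nth_offset Amat_eq_qratio)
  also have "\<dots> = (\<Sum>j=k..<n. B (n - j) 1 * (q ^ (k * m) * (q ^ ((n - j) * (j - k)) * h (j - k) $ (j - k))))"
    by (intro sum.cong refl) (simp add: h_def power_mult_nth_qratio_column n)
  also have "\<dots> = (\<Sum>l=1..m. q ^ (k * m) * (q ^ (l * (m - l)) * h (m - l) $ (m - l) * B l 1))"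
    by (rule sum.reindex_bij_witness[of _ "\<lambda>l. n - l" "\<lambda>j. n - j"]) (auto simp: n mult_ac)
  also have "\<dots> = q ^ (k * m) * h m $ (m - 1)"
    using inverse_column_one_sum[OF inv m] by (simp add: h_def flip: sum_distrib_left)
  finally show ?thesis .
qed

lemma inverse_formula_times_Amat:
  fixes a b q :: complex
  assumes inv: "lt_inverse (Amat a b q) B" and "k \<le> n"
  shows "(\<Sum>i=k..n. (qratio b a q (n - 1) n $ (n - i)
            - a * (\<Sum>j=i..<n. B (n - j) 1 * q ^ ((n - j) * j) * qratio b a q j (Suc j) $ (j - i)))
          * Amat a b q i k) = (if n = k then 1 else 0)"
proof (cases "n = k")
  case True
  then show ?thesis
    by (simp add: Amat_eq_qratio qratio_def)
next
  case False
  with assms(2) obtain m where n: "n = k + m" and m: "1 \<le> m"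
    by (metis le_add_diff_inverse less_one linorder_not_le add.right_neutral)
  have "(\<Sum>i=k..n. (f i - a * g i) * Amat a b q i k)
      = (\<Sum>i=k..n. f i * Amat a b q i k) - a * (\<Sum>i=k..n. g i * Amat a b q i k)" for f g
    by (simp add: left_diff_distrib sum_subtractf sum_distrib_left mult.assoc)
  then show ?thesis
    using False leading_sum_times_Amat[OF n m] correction_sum_times_Amat[OF inv n m] by simp
qed

theorem theorem2p1:
  fixes a b q :: complex and B :: "nat \<Rightarrow> nat \<Rightarrow> complex" and n k :: nat
  assumes "q \<noteq> 0"
    and "lt_inverse (Amat a b q) B"
    and "k \<le> n"
  shows "B n k =
    fps_nth (qpoch b q (int n - 1) * inverse (qpoch a q (int n))) (n - k)
    - a * (\<Sum>i=k..<n. B (n - i) 1 * q ^ ((n - i) * i) *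
             fps_nth (qpoch b q (int i) * inverse (qpoch a q (int i + 1))) (i - k))"
proof -
  txt \<open>The hypothesis \<open>q \<noteq> 0\<close> is not needed: the negative index \<open>int n - 1 = -1\<close> only
    occurs for \<open>n = 0\<close>, and then only the constant term of the series enters.\<close>
  define C where "C i = qratio b a q (n - 1) n $ (n - i)
    - a * (\<Sum>j=i..<n. B (n - j) 1 * q ^ ((n - j) * j) * qratio b a q j (Suc j) $ (j - i))" for i
  have "(\<Sum>i=j..n. B n i * Amat a b q i j) = (\<Sum>i=j..n. C i * Amat a b q i j)" if "j \<le> n" for j
    using assms(2) inverse_formula_times_Amat[OF assms(2) that] by (simp add: C_def lt_inverse_def)
  then have "B n k = C k"
    using assms(3) by (rule unitriangular_left_inverse_row_unique[OF Amat_diag])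
  then show ?thesis
    using assms(3) by (simp add: C_def nth_qpoch_pred_ratio qpoch_ratio_eq_qratio)
qed

end
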